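(* Let $\lambda\geqslant\omega$ be a cardinal and $n$ a positive integer, and let $\mathscr{I}_\lambda^n$ carry any Hausdorff topology making it a topological semigroup. Then every continuous homomorphism from $\mathscr{I}_\lambda^n$ into a compact (Hausdorff) topological semigroup is annihilating (constant).
   Context: A topological semigroup is a Hausdorff space with a continuous associative multiplication. For a set $X$ of cardinality $\lambda$, $\mathscr{I}(X)$ is the semigroup of all partial one-to-one maps of $X$ (including the empty map) under composition; the rank of $\alpha$ is $|\operatorname{ran}\alpha|$, and $\mathscr{I}_\lambda^n=\{\alpha\in\mathscr{I}(X):\operatorname{rank}\alpha\leqslant n\}$. A homomorphism is annihilating if it is constant. *)

theory Defs
  imports "HOL-Analysis.Analysis"
begin

text \<open>Partial one-to-one maps of a set X are modelled as maps (option-valued functions)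
with domain and range contained in X that are injective on their domain.\<close>

definition partial_inj :: "'a set \<Rightarrow> ('a \<rightharpoonup> 'a) \<Rightarrow> bool" where
  "partial_inj X f \<longleftrightarrow> dom f \<subseteq> X \<and> ran f \<subseteq> X \<and> inj_on f (dom f)"

definition rank :: "('a \<rightharpoonup> 'a) \<Rightarrow> nat" where
  "rank f = card (ran f)"

text \<open>The semigroup I_lambda^n over X: partial injections of rank at most n.
 Finiteness of the range is required explicitly since card of an infinite set is 0.\<close>
definition In_semigroup :: "'a set \<Rightarrow> nat \<Rightarrow> ('a \<rightharpoonup> 'a) set" where
  "In_semigroup X n = {f. partial_inj X f \<and> finite (ran f) \<and> rank f \<le> n}"

text \<open>Composition: first apply f, then g (alpha beta = x -> beta(alpha x)).\<close>
definition pmult :: "('a \<rightharpoonup> 'a) \<Rightarrow> ('a \<rightharpoonup> 'a) \<Rightarrow> ('a \<rightharpoonup> 'a)" where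
  "pmult f g = g \<circ>\<^sub>m f"

definition topological_semigroup :: "'b topology \<Rightarrow> ('b \<Rightarrow> 'b \<Rightarrow> 'b) \<Rightarrow> bool" where
  "topological_semigroup T m \<longleftrightarrow>
     Hausdorff_space T \<and>
     (\<forall>x\<in>topspace T. \<forall>y\<in>topspace T. m x y \<in> topspace T) \<and>
     (\<forall>x\<in>topspace T. \<forall>y\<in>topspace T. \<forall>z\<in>topspace T. m (m x y) z = m x (m y z)) \<and>
     continuous_map (prod_topology T T) T (\<lambda>p. m (fst p) (snd p))"

definition semigroup_hom ::
  "'b set \<Rightarrow> ('b \<Rightarrow> 'b \<Rightarrow> 'b) \<Rightarrow> ('c \<Rightarrow> 'c \<Rightarrow> 'c) \<Rightarrow> ('b \<Rightarrow> 'c) \<Rightarrow> bool" where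
  "semigroup_hom A m1 m2 h \<longleftrightarrow> (\<forall>x\<in>A. \<forall>y\<in>A. h (m1 x y) = m2 (h x) (h y))"

definition annihilating :: "'b set \<Rightarrow> ('b \<Rightarrow> 'c) \<Rightarrow> bool" where
  "annihilating A h \<longleftrightarrow> (\<exists>c. \<forall>x\<in>A. h x = c)"

end

theory Submission
  imports Defs "HOL-Library.Countable_Set"
begin

(* Proof idea: fix alpha in I_lambda^n.  Since X is infinite, we can place
   infinitely many pairwise disjoint copies of dom alpha inside X and so obtain sequences
   x_k, y_k in I_lambda^n with  x_k y_k = alpha  and  x_k y_l = 0 (the empty map) for k ~= l.
   In a compact topological semigroup, any sequences a_k, b_k with  a_k b_k = c  and
   a_k b_l = z  (k ~= l) force c = z: take a cluster point (p, q) of (a_k, b_k); continuity of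
   multiplication gives pq = c, continuity of right translations gives p b_l = z for all l,
   and then continuity of left translation by p gives pq = z.  Applied to a_k = h x_k and
   b_k = h y_k this yields h alpha = h 0 for all alpha.
   Of the hypotheses, the argument needs only that h is a homomorphism with values in S
   (which continuity provides). *)

lemma compact_space_sequence_cluster:
  assumes "compact_space X" and "\<And>k. w k \<in> topspace X"
  obtains p where "\<And>l::nat. p \<in> X closure_of (w ` {l<..})"
proof -
  define C where "C l = X closure_of (w ` {l<..})" for l
  have "(\<Inter>l. C l) \<noteq> {}"
  proof (rule compact_space_imp_nest[OF assms(1)])
    show "closedin X (C l)" for l by (simp add: C_def)
    show "C l \<noteq> {}" for l
      using closure_of_subset[of "w ` {l<..}" X] assms(2) unfolding C_def by fastforce
    show "decseq C" unfolding decseq_def C_def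
      by (intro allI impI closure_of_mono image_mono) auto
  qed
  then show ?thesis using that unfolding C_def by blast
qed

lemma continuous_map_constant_on_closure:
  assumes "continuous_map X Y f" and "t1_space Y"
    and "p \<in> X closure_of A" and "\<And>a. a \<in> A \<Longrightarrow> f a = z"
  shows "f p = z"
proof -
  have "f p \<in> Y closure_of (f ` A)"
    using continuous_map_image_closure_subset[OF assms(1)] assms(3) by blast
  also have "\<dots> \<subseteq> Y closure_of {z}"
    using assms(4) by (intro closure_of_mono) blast
  finally have fp: "f p \<in> Y closure_of {z}" .
  have "z \<in> topspace Y"
  proof (rule ccontr)
    assume "z \<notin> topspace Y"
    then have "Y closure_of {z} = {}"
      by (metis closure_of_restrict closure_of_empty Int_insert_right_if0 Int_empty_right)
    with fp show False by simp
  qed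
  with fp assms(2) show ?thesis
    by (simp add: closedin_t1_singleton closure_of_closedin)
qed

lemma topological_semigroup_translations:
  assumes "topological_semigroup S m" and "a \<in> topspace S"
  shows "continuous_map S S (\<lambda>u. m u a)" and "continuous_map S S (\<lambda>u. m a u)"
proof -
  have mult: "continuous_map (prod_topology S S) S (\<lambda>p. m (fst p) (snd p))"
    using assms(1) unfolding topological_semigroup_def by blast
  have "continuous_map S (prod_topology S S) (\<lambda>u. (u, a))"
    and "continuous_map S (prod_topology S S) (\<lambda>u. (a, u))"
    using assms(2) by (auto intro!: continuous_map_pairedI simp: continuous_map_id[unfolded id_def])
  from this[THEN continuous_map_compose, OF mult]
  show "continuous_map S S (\<lambda>u. m u a)" and "continuous_map S S (\<lambda>u. m a u)"
    by (simp_all add: o_def)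
qed

lemma compact_semigroup_diagonal_product:
  assumes sg: "topological_semigroup S m" and "compact_space S"
    and a: "\<And>k::nat. a k \<in> topspace S" and b: "\<And>k. b k \<in> topspace S"
    and diag: "\<And>k. m (a k) (b k) = c"
    and off_diag: "\<And>k l. k \<noteq> l \<Longrightarrow> m (a k) (b l) = z"
  shows "c = z"
proof -
  have t1: "t1_space S" and
    mult: "continuous_map (prod_topology S S) S (\<lambda>p. m (fst p) (snd p))"
    using sg unfolding topological_semigroup_def by (auto simp: Hausdorff_imp_t1_space)
  define w where "w k = (a k, b k)" for k
  obtain pq where cluster: "\<And>l. pq \<in> prod_topology S S closure_of (w ` {l<..})"
    using compact_space_sequence_cluster[of "prod_topology S S" w] assms(2) a b
    by (auto simp: compact_space_prod_topology w_def)
  obtain p q where pq: "\<And>l. (p, q) \<in> prod_topology S S closure_of (w ` {l<..})"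
    using cluster by (cases pq) blast
  have tails: "p \<in> S closure_of (a ` {l<..})" "q \<in> S closure_of (b ` {l<..})" for l
  proof -
    have "w ` {l<..} \<subseteq> a ` {l<..} \<times> b ` {l<..}" by (auto simp: w_def)
    then have "(p, q) \<in> prod_topology S S closure_of (a ` {l<..} \<times> b ` {l<..})"
      using pq[of l] closure_of_mono by blast
    then show "p \<in> S closure_of (a ` {l<..})" "q \<in> S closure_of (b ` {l<..})"
      unfolding closure_of_Times by simp_all
  qed
  have p: "p \<in> topspace S" using tails(1) closure_of_subset_topspace by fastforce
  have diag_limit: "m (fst (p, q)) (snd (p, q)) = c"
  proof (rule continuous_map_constant_on_closure[OF mult t1 pq[of 0]])
    show "m (fst u) (snd u) = c" if "u \<in> w ` {0<..}" for u
      using that diag by (auto simp: w_def)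
  qed
  have right: "m p (b l) = z" for l
  proof (rule continuous_map_constant_on_closure
      [OF topological_semigroup_translations(1)[OF sg b] t1 tails(1)[of l]])
    show "m u (b l) = z" if "u \<in> a ` {l<..}" for u
      using that off_diag by auto
  qed
  have off_diag_limit: "m p q = z"
  proof (rule continuous_map_constant_on_closure
      [OF topological_semigroup_translations(2)[OF sg p] t1 tails(2)[of 0]])
    show "m p v = z" if "v \<in> b ` {0<..}" for v
      using that right by auto
  qed
  show ?thesis using diag_limit off_diag_limit by simp
qed

text \<open>Membership in I_lambda^n, phrased through the domain: for a partial injection,
  the range is the injective image of the domain.\<close>

lemma In_semigroup_iff:
  "f \<in> In_semigroup X n \<longleftrightarrow>
     dom f \<subseteq> X \<and> ran f \<subseteq> X \<and> inj_on f (dom f) \<and> finite (dom f) \<and> card (dom f) \<le> n"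
proof (cases "inj_on f (dom f)")
  case True
  have ran_img: "ran f = (\<lambda>x. the (f x)) ` dom f"
    unfolding ran_def by force
  have "inj_on (\<lambda>x. the (f x)) (dom f)"
    using True unfolding inj_on_def by (metis domD option.sel)
  then have "finite (ran f) \<longleftrightarrow> finite (dom f)" and "card (ran f) = card (dom f)"
    unfolding ran_img by (simp_all add: finite_image_iff card_image)
  with True show ?thesis
    unfolding In_semigroup_def partial_inj_def rank_def by auto
next
  case False
  then show ?thesis unfolding In_semigroup_def partial_inj_def by simp
qed

lemma disjoint_copies:
  assumes "infinite X" and "finite D"
  obtains G :: "nat \<Rightarrow> 'b \<Rightarrow> 'a"
  where "\<And>k d. G k d \<in> X"
    and "\<And>k l d e. d \<in> D \<Longrightarrow> e \<in> D \<Longrightarrow> G k d = G l e \<longleftrightarrow> k = l \<and> d = e"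
proof -
  obtain g :: "nat \<Rightarrow> 'a" where g: "inj g" "range g \<subseteq> X"
    using infinite_countable_subset[OF assms(1)] by blast
  define P where "P = (UNIV \<times> D :: (nat \<times> 'b) set)"
  have "countable P"
    using assms(2) by (simp add: P_def countable_finite)
  then have "inj_on (to_nat_on P) P" by (rule inj_on_to_nat_on)
  then have "inj_on (g \<circ> to_nat_on P) P"
    using g(1) by (simp add: comp_inj_on inj_on_subset)
  note inj = inj_onD[OF this]
  show ?thesis
  proof (rule that[of "\<lambda>k d. g (to_nat_on P (k, d))"])
    show "g (to_nat_on P (k, d)) \<in> X" for k d using g(2) by blast
    show "g (to_nat_on P (k, d)) = g (to_nat_on P (l, e)) \<longleftrightarrow> k = l \<and> d = e"
      if "d \<in> D" "e \<in> D" for k l d e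
      using inj[of "(k, d)" "(l, e)"] that by (auto simp: P_def)
  qed
qed

text \<open>Every alpha in I_lambda^n (X infinite) factors as x_k y_k with x_k y_l = 0 for k \<noteq> l:
  x_k maps dom alpha onto its k-th disjoint copy and y_k maps that copy back via alpha.\<close>

lemma orthogonal_factorisations:
  assumes "infinite X" and alpha: "\<alpha> \<in> In_semigroup X n"
  obtains x y :: "nat \<Rightarrow> 'a \<rightharpoonup> 'a"
  where "\<And>k. x k \<in> In_semigroup X n" and "\<And>k. y k \<in> In_semigroup X n"
    and "\<And>k. pmult (x k) (y k) = \<alpha>"
    and "\<And>k l. k \<noteq> l \<Longrightarrow> pmult (x k) (y l) = Map.empty"
proof -
  define D where "D = dom \<alpha>"
  have D: "D \<subseteq> X" "ran \<alpha> \<subseteq> X" "inj_on \<alpha> D" "finite D" "card D \<le> n"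
    using alpha unfolding In_semigroup_iff D_def by auto
  obtain G :: "nat \<Rightarrow> 'a \<Rightarrow> 'a" where GX: "\<And>k d. G k d \<in> X"
    and G_eq: "\<And>k l d e. d \<in> D \<Longrightarrow> e \<in> D \<Longrightarrow> G k d = G l e \<longleftrightarrow> k = l \<and> d = e"
    using disjoint_copies[OF assms(1) D(4)] by blast
  have G_inj: "inj_on (G k) D" for k by (simp add: G_eq inj_on_def)
  define x where "x k = (\<lambda>d. Some (G k d)) |` D" for k
  define y where "y k = (\<alpha> \<circ> inv_into D (G k)) |` (G k ` D)" for k
  have dom_x: "dom (x k) = D" and ran_x: "ran (x k) = G k ` D" for k
    by (auto simp: x_def dom_def ran_def restrict_map_def)
  have y_G: "y k (G k d) = \<alpha> d" if "d \<in> D" for k d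
    using that G_inj by (simp add: y_def)
  have y_other: "y l (G k d) = None" if "d \<in> D" "k \<noteq> l" for k l d
  proof -
    have "G k d \<notin> G l ` D" using that G_eq by blast
    then show ?thesis by (simp add: y_def)
  qed
  have dom_y: "dom (y k) = G k ` D" for k
  proof (intro set_eqI iffI)
    show "u \<in> G k ` D" if "u \<in> dom (y k)" for u
      using that by (auto simp: y_def dom_def restrict_map_def split: if_splits)
    show "u \<in> dom (y k)" if u: "u \<in> G k ` D" for u
    proof -
      obtain d where "d \<in> D" "u = G k d" using u by blast
      then show ?thesis using y_G[of d k] by (simp add: D_def domIff)
    qed
  qed
  have ran_y: "ran (y k) \<subseteq> ran \<alpha>" for k
  proof
    fix v assume "v \<in> ran (y k)"
    then obtain u where "(\<alpha> \<circ> inv_into D (G k)) u = Some v"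
      unfolding y_def by (blast dest: ran_restrictD)
    then show "v \<in> ran \<alpha>" by (auto simp: ran_def)
  qed
  have inj_y: "inj_on (y k) (G k ` D)" for k
  proof (rule inj_onI)
    fix u v assume "u \<in> G k ` D" "v \<in> G k ` D" and eq: "y k u = y k v"
    then obtain d e where de: "d \<in> D" "e \<in> D" "u = G k d" "v = G k e" by blast
    then have "\<alpha> d = \<alpha> e" using eq y_G by simp
    then show "u = v" using inj_onD[OF D(3) _ de(1,2)] de(3,4) by simp
  qed
  show ?thesis
  proof
    show "x k \<in> In_semigroup X n" for k
      unfolding In_semigroup_iff dom_x ran_x using D GX G_inj
      by (auto simp: inj_on_def x_def)
    show "y k \<in> In_semigroup X n" for k
      unfolding In_semigroup_iff dom_y
      using D GX ran_y[of k] inj_y card_image_le[OF D(4), of "G k"] by auto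
    show "pmult (x k) (y k) = \<alpha>" for k
    proof
      fix d show "pmult (x k) (y k) d = \<alpha> d"
        by (cases "d \<in> D") (auto simp: pmult_def x_def y_G D_def domIff)
    qed
    show "pmult (x k) (y l) = Map.empty" if "k \<noteq> l" for k l
    proof
      fix d show "pmult (x k) (y l) d = None"
        using y_other[OF _ that] by (cases "d \<in> D") (auto simp: pmult_def x_def)
    qed
  qed
qed

theorem theorem9:
  fixes X :: "'a set" and n :: nat
    and T :: "('a \<rightharpoonup> 'a) topology"
    and S :: "'b topology" and m :: "'b \<Rightarrow> 'b \<Rightarrow> 'b"
    and h :: "('a \<rightharpoonup> 'a) \<Rightarrow> 'b"
  assumes "infinite X"
    and "n \<ge> 1"
    and "topspace T = In_semigroup X n"
    and "topological_semigroup T pmult"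
    and "topological_semigroup S m"
    and "compact_space S"
    and "continuous_map T S h"
    and "semigroup_hom (In_semigroup X n) pmult m h"
  shows "annihilating (In_semigroup X n) h"
proof -
  have h_S: "h f \<in> topspace S" if "f \<in> In_semigroup X n" for f
    using continuous_map_image_subset_topspace[OF assms(7)] assms(3) that by blast
  have h_hom: "h (pmult f g) = m (h f) (h g)"
    if "f \<in> In_semigroup X n" "g \<in> In_semigroup X n" for f g
    using assms(8) that unfolding semigroup_hom_def by blast
  have "h \<alpha> = h Map.empty" if alpha: "\<alpha> \<in> In_semigroup X n" for \<alpha>
  proof -
    obtain x y :: "nat \<Rightarrow> 'a \<rightharpoonup> 'a"
      where x: "\<And>k. x k \<in> In_semigroup X n" and y: "\<And>k. y k \<in> In_semigroup X n"
      and diag: "\<And>k. pmult (x k) (y k) = \<alpha>"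
      and off_diag: "\<And>k l. k \<noteq> l \<Longrightarrow> pmult (x k) (y l) = Map.empty"
      using orthogonal_factorisations[OF assms(1) alpha] by blast
    show ?thesis
    proof (rule compact_semigroup_diagonal_product[OF assms(5,6)])
      show "h (x k) \<in> topspace S" "h (y k) \<in> topspace S" for k
        using h_S[OF x[of k]] h_S[OF y[of k]] .
      show "m (h (x k)) (h (y k)) = h \<alpha>" for k
        using h_hom[OF x[of k] y[of k]] diag[of k] by simp
      show "m (h (x k)) (h (y l)) = h Map.empty" if "k \<noteq> l" for k l
        using h_hom[OF x[of k] y[of l]] off_diag[OF that] by simp
    qed
  qed
  then show ?thesis unfolding annihilating_def by blast
qed

end
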